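(* Let $T$ be a permutation tableau of length $n$, let $\pi=\xi(T)=\pi_1\pi_2\cdots\pi_n$, and let $\bar\pi=(n+1-\pi_n,\ldots,n+1-\pi_2,n+1-\pi_1)$ be the reverse complement of $\pi$. Then $$\mathrm{inv}(T)=f_{32\text{--}1}(\bar\pi).$$ Equivalently, $\mathrm{inv}(T)=f_{3\text{--}21}(\pi)$.
   Context: Permutation tableaux. Draw a Ferrers diagram in English convention: rows are left-justified, row lengths weakly decrease from top to bottom, and every column is nonempty. Rows of length zero are allowed. A permutation tableau $T$ is a filling of the cells of such a diagram with 0's and 1's satisfying two conditions: (i) every column contains at least one 1; (ii) no cell containing 0 has both a 1 above it in its column and a 1 to its left in its row. The length $n$ of $T$ is its number of rows plus its number of columns. Labels. The southeast boundary of the diagram is a lattice path of $n$ unit south/west steps from the top-right corner to the bottom-left corner. Its steps are labeled $1,\ldots,n$ in order. Each row gets the label of its south step (at the right end of the row), and each column gets the label of its west step (at the bottom of the column). Thus $[n]$ is partitioned into row labels and column labels. $(i,j)$ denotes the cell in the row labeled $i$ and the column labeled $j$. Zeros, ones and rows. A 1 is topmost if there is no 1 above it in its column. A 0 is restricted if there is a 1 above it in its column. A rightmost restricted 0 is a restricted 0 with no restricted 0 to its right in its row. A row is unrestricted if it contains no restricted 0; empty rows are unrestricted. Alternative representation and dots. Put a black dot on each topmost 1; there is exactly one per column. Put a white dot on each rightmost restricted 0; there is exactly one in each restricted row. A black dot is labeled by its column label, and a white dot by its row label. Alternating paths. The alternating path from a dot is a sequence of dots, identified with the sequence of their labels, built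 as follows. - From a white dot in cell $(i,j)$, the next dot is the black dot of column $j$. - From a black dot in cell $(i,j)$: if row $i$ is unrestricted, the path ends; otherwise the next dot is the white dot of row $i$. Every path therefore ends at a black dot in an unrestricted row. - If $k$ is a column label or the label of a restricted row, $P_k$ is the alternating path starting at the dot labeled $k$. - If $r$ is the label of an unrestricted row, $P_r$ is the empty path. We say $P_k$ is contained in a path $P$ if $k$ is the label of a dot of $P$; then $P_k$ is a final segment of $P$. An empty path $P_r$ is contained in no path. Order on paths. Let $a\neq b$ be labels such that neither of $P_a,P_b$ is contained in the other. Remove from $P_a$ and $P_b$ their longest common final segment (nothing is removed if they share no dot), obtaining $P'_a$ and $P'_b$. The ending position of $P'_a$ is defined as follows: - if $P'_a$ is nonempty, it is the cell of its last dot; - if $P_a$ is the empty path of an unrestricted row $r$, it is a point at the right end of row $r$, strictly to the right of all cells of that row. Define $P_a>P_b$ if the ending position of $P'_a$ lies in a row strictly below that of $P'_b$, or lies in the same row and strictly to the right. Otherwise $P_a<P_b$. Inversions. An inversion of $T$ is a pair $(j,k)$ of labels satisfying all of the following: $j$ is a column label; $j<k$; $k$ is not the label of a dot of $P_j$; and $P_j>P_k$. $\mathrm{inv}(T)$ is the number of inversions of $T$. The bijection $\xi$ (Corteel–Nadeau). Start with the labels of the unrestricted rows written in increasing order. Then process the column labels of $T$ in decreasing order. For a column $j$: 1. If its black dot is in cell $(i,j)$, insert $j$ immediately to the left of $i$. 2. If column $j$ contains white dots in rows $i_1<\cdots<i_k$, insert $i_1i_2\cdots i_k$, in this increasing order,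 immediately to the left of $j$. The final word is the permutation $\xi(T)$ of $[n]$. Dashed patterns. For a permutation $\sigma=\sigma_1\cdots\sigma_n$: - $f_{32\text{--}1}(\sigma)$ is the number of pairs $(a,b)$ with $a+1<b$ and $\sigma_a>\sigma_{a+1}>\sigma_b$; - $f_{3\text{--}21}(\sigma)$ is the number of pairs $(a,b)$ with $a<b<n$ and $\sigma_a>\sigma_b>\sigma_{b+1}$. *)

theory Defs
  imports Main
begin

text \<open>The southeast boundary steps are labelled 1..n; R is the set of row labels
  (south steps), the column labels are {1..n} - R.  Rows go from top to bottom in
  increasing label order, columns from right to left in increasing label order
  (so "above" = smaller row label, "to the left" = larger column label).
  The filling is f :: nat => nat => bool (True = 1), only its values on cells matter.\<close>

definition cols :: "nat \<Rightarrow> nat set \<Rightarrow> nat set" where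
  "cols n R = {1..n} - R"

definition is_cell :: "nat \<Rightarrow> nat set \<Rightarrow> nat \<Rightarrow> nat \<Rightarrow> bool" where
  "is_cell n R i j \<longleftrightarrow> i \<in> R \<and> j \<in> cols n R \<and> i < j"

definition perm_tableau :: "nat \<Rightarrow> nat set \<Rightarrow> (nat \<Rightarrow> nat \<Rightarrow> bool) \<Rightarrow> bool" where
  "perm_tableau n R f \<longleftrightarrow>
     R \<subseteq> {1..n} \<and>
     \<comment> \<open>Ferrers diagram: every column is nonempty\<close>
     (\<forall>j \<in> cols n R. \<exists>i. is_cell n R i j) \<and>
     \<comment> \<open>(i) every column contains a 1\<close>
     (\<forall>j \<in> cols n R. \<exists>i. is_cell n R i j \<and> f i j) \<and>
     \<comment> \<open>(ii) no 0 with a 1 above it and a 1 to its left\<close>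
     (\<forall>i j. is_cell n R i j \<and> \<not> f i j \<longrightarrow>
        \<not> ((\<exists>i'. is_cell n R i' j \<and> i' < i \<and> f i' j) \<and>
           (\<exists>j'. is_cell n R i j' \<and> j < j' \<and> f i j')))"

text \<open>Row of the topmost 1 (black dot) of column j.\<close>
definition top1 :: "nat \<Rightarrow> nat set \<Rightarrow> (nat \<Rightarrow> nat \<Rightarrow> bool) \<Rightarrow> nat \<Rightarrow> nat" where
  "top1 n R f j = Min {i. is_cell n R i j \<and> f i j}"

definition restricted0 :: "nat \<Rightarrow> nat set \<Rightarrow> (nat \<Rightarrow> nat \<Rightarrow> bool) \<Rightarrow> nat \<Rightarrow> nat \<Rightarrow> bool" where
  "restricted0 n R f i j \<longleftrightarrow> is_cell n R i j \<and> \<not> f i j \<and>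
      (\<exists>i'. is_cell n R i' j \<and> i' < i \<and> f i' j)"

definition restricted_row :: "nat \<Rightarrow> nat set \<Rightarrow> (nat \<Rightarrow> nat \<Rightarrow> bool) \<Rightarrow> nat \<Rightarrow> bool" where
  "restricted_row n R f i \<longleftrightarrow> i \<in> R \<and> (\<exists>j. restricted0 n R f i j)"

definition unrestricted_row :: "nat \<Rightarrow> nat set \<Rightarrow> (nat \<Rightarrow> nat \<Rightarrow> bool) \<Rightarrow> nat \<Rightarrow> bool" where
  "unrestricted_row n R f i \<longleftrightarrow> i \<in> R \<and> \<not> (\<exists>j. restricted0 n R f i j)"

text \<open>Column of the rightmost restricted 0 (white dot) of a restricted row i
  (rightmost = smallest column label).\<close>
definition white_col :: "nat \<Rightarrow> nat set \<Rightarrow> (nat \<Rightarrow> nat \<Rightarrow> bool) \<Rightarrow> nat \<Rightarrow> nat" where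
  "white_col n R f i = Min {j. restricted0 n R f i j}"

text \<open>Successor of a dot (identified with its label) on an alternating path.\<close>
definition next_dot :: "nat \<Rightarrow> nat set \<Rightarrow> (nat \<Rightarrow> nat \<Rightarrow> bool) \<Rightarrow> nat \<Rightarrow> nat option" where
  "next_dot n R f k =
     (if k \<in> R then Some (white_col n R f k)
      else if restricted_row n R f (top1 n R f k) then Some (top1 n R f k) else None)"

text \<open>Iterate a partial successor function with fuel; the alternating path has
  at most n dots (distinct labels), so fuel n never truncates it.\<close>
fun iter_path :: "(nat \<Rightarrow> nat option) \<Rightarrow> nat \<Rightarrow> nat \<Rightarrow> nat list" where
  "iter_path nx 0 k = [k]"
| "iter_path nx (Suc m) k = k # (case nx k of None \<Rightarrow> [] | Some k' \<Rightarrow> iter_path nx m k')"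

definition alt_path :: "nat \<Rightarrow> nat set \<Rightarrow> (nat \<Rightarrow> nat \<Rightarrow> bool) \<Rightarrow> nat \<Rightarrow> nat list" where
  "alt_path n R f k =
     (if unrestricted_row n R f k then [] else iter_path (next_dot n R f) n k)"

text \<open>Position (row label, column label) of the dot labelled k; for an unrestricted
  row r this is the point (r, 0), strictly right of all cells of row r
  (all cells of row r have column label > r > 0).\<close>
definition dot_pos :: "nat \<Rightarrow> nat set \<Rightarrow> (nat \<Rightarrow> nat \<Rightarrow> bool) \<Rightarrow> nat \<Rightarrow> nat \<times> nat" where
  "dot_pos n R f k =
     (if k \<in> R then (if restricted_row n R f k then (k, white_col n R f k) else (k, 0))
      else (top1 n R f k, k))"

fun common_suffix_len :: "'a list \<Rightarrow> 'a list \<Rightarrow> nat" where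
  "common_suffix_len xs ys =
     (if xs \<noteq> [] \<and> ys \<noteq> [] \<and> last xs = last ys
      then Suc (common_suffix_len (butlast xs) (butlast ys)) else 0)"

text \<open>Ending position of P'_a, where P'_a is P_a with the longest common final
  segment of P_a and P_b removed.\<close>
definition end_pos :: "nat \<Rightarrow> nat set \<Rightarrow> (nat \<Rightarrow> nat \<Rightarrow> bool) \<Rightarrow> nat \<Rightarrow> nat \<Rightarrow> nat \<times> nat" where
  "end_pos n R f a b =
     (let pa = alt_path n R f a; pb = alt_path n R f b;
          pa' = take (length pa - common_suffix_len pa pb) pa
      in if pa' = [] then dot_pos n R f a else dot_pos n R f (last pa'))"

text \<open>P_a > P_b: ending position of P'_a strictly lower, or same row and strictly
  to the right (= smaller column coordinate).\<close>
definition path_gt :: "nat \<Rightarrow> nat set \<Rightarrow> (nat \<Rightarrow> nat \<Rightarrow> bool) \<Rightarrow> nat \<Rightarrow> nat \<Rightarrow> bool" where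
  "path_gt n R f a b =
     (let ea = end_pos n R f a b; eb = end_pos n R f b a
      in fst ea > fst eb \<or> (fst ea = fst eb \<and> snd ea < snd eb))"

definition tab_inv :: "nat \<Rightarrow> nat set \<Rightarrow> (nat \<Rightarrow> nat \<Rightarrow> bool) \<Rightarrow> nat" where
  "tab_inv n R f = card {(j, k). j \<in> cols n R \<and> j < k \<and> k \<le> n \<and>
       k \<notin> set (alt_path n R f j) \<and> path_gt n R f j k}"

definition ins_left :: "nat list \<Rightarrow> nat \<Rightarrow> nat list \<Rightarrow> nat list" where
  "ins_left xs y w = concat (map (\<lambda>z. if z = y then xs @ [z] else [z]) w)"

definition xi_step :: "nat \<Rightarrow> nat set \<Rightarrow> (nat \<Rightarrow> nat \<Rightarrow> bool) \<Rightarrow> nat \<Rightarrow> nat list \<Rightarrow> nat list" where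
  "xi_step n R f j w =
     ins_left (sorted_list_of_set {i. restricted_row n R f i \<and> white_col n R f i = j}) j
       (ins_left [j] (top1 n R f j) w)"

definition xi :: "nat \<Rightarrow> nat set \<Rightarrow> (nat \<Rightarrow> nat \<Rightarrow> bool) \<Rightarrow> nat list" where
  "xi n R f = fold (xi_step n R f) (rev (sorted_list_of_set (cols n R)))
                (sorted_list_of_set {i. unrestricted_row n R f i})"

text \<open>Dashed patterns (lists indexed from 0; sigma_a = sigma ! (a-1)).\<close>
definition f32_1 :: "nat list \<Rightarrow> nat" where
  "f32_1 s = card {(a, b). a + 1 < b \<and> b < length s \<and> s ! a > s ! (a + 1) \<and> s ! (a + 1) > s ! b}"

definition f3_21 :: "nat list \<Rightarrow> nat" where
  "f3_21 s = card {(a, b). a < b \<and> b + 1 < length s \<and> s ! a > s ! b \<and> s ! b > s ! (b + 1)}"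

definition rev_compl :: "nat \<Rightarrow> nat list \<Rightarrow> nat list" where
  "rev_compl n s = map (\<lambda>x. n + 1 - x) (rev s)"

end

theory Submission
  imports Defs "HOL-Library.List_Lexorder"
begin

(* Every label x of the tableau determines its
   route: the alternating path P_x followed by the unrestricted row in which it
   ends (just [x] if x is itself an unrestricted row).  Reading the route
   backwards from that row and encoding row labels r by r and column labels c by
   2n+1-c gives a word; appending a sentinel larger than every code gives key x.
   Keys are compared lexicographically (HOL-Library.List_Lexorder).

   1. Invariant of the construction xi: after the columns > m have been processed
      the word lists exactly the labels placed so far, strictly increasing in
      key order, and consecutive letters rise after a row label and fall after a
      column label.  Hence xi(T) is a permutation of [n] sorted by key whose
      descents are exactly the positions carrying a column label.
   2. For a column j and a label k > j not on P_j, the path order of the paper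
      is the key order: P_j > P_k iff key k < key j; labels on P_j have larger
      keys than j.
   3. So the inversions (j,k) correspond to the pairs of positions a < b with
      pi_a > pi_b > pi_(b+1) (pi_b = j, pi_a = k): inv(T) = f_{3-21}(pi). *)

declare common_suffix_len.simps[simp del]

section \<open>Words and dashed patterns\<close>

lemma rev_compl_nth: "i < length s \<Longrightarrow> rev_compl n s ! i = n + 1 - s ! (length s - Suc i)"
  by (simp add: rev_compl_def rev_nth)

text \<open>Reversal and complementation turn the occurrence (a, b) of 32-1 into the
  occurrence (L-1-b, L-2-a) of 3-21 (L the length of the word).\<close>
lemma rev_compl_occurrence:
  fixes s :: "nat list" and n :: nat
  defines "L \<equiv> length s" and "t \<equiv> rev_compl n s"
  assumes small: "\<forall>x\<in>set s. x \<le> n" and ab: "a + 1 < b" "b < L"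
  shows "(t ! a > t ! (a + 1) \<and> t ! (a + 1) > t ! b)
     \<longleftrightarrow> (s ! (L - 1 - b) > s ! (L - 2 - a) \<and> s ! (L - 2 - a) > s ! (L - 1 - a))"
proof -
  have t: "t ! a = n + 1 - s ! (L - 1 - a)" "t ! (a + 1) = n + 1 - s ! (L - 2 - a)"
    "t ! b = n + 1 - s ! (L - 1 - b)"
    using rev_compl_nth[of _ s n] ab by (simp_all add: L_def t_def numeral_2_eq_2)
  have le: "s ! (L - 1 - a) \<le> n" "s ! (L - 2 - a) \<le> n" "s ! (L - 1 - b) \<le> n"
    using small ab by (auto simp: L_def)
  have compl_less: "n + 1 - x < n + 1 - y \<longleftrightarrow> y < x" if "x \<le> n" "y \<le> n" for x y :: nat
    using that by auto
  show ?thesis unfolding t compl_less[OF le(2,1)] compl_less[OF le(3,2)] by blast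
qed

lemma f32_1_rev_compl:
  fixes s :: "nat list"
  assumes small: "\<forall>x\<in>set s. x \<le> n"
  shows "f32_1 (rev_compl n s) = f3_21 s"
proof -
  let ?L = "length s" and ?t = "rev_compl n s"
  define X' where "X' = {(a, b). a + 1 < b \<and> b < length ?t \<and> ?t ! a > ?t ! (a + 1) \<and> ?t ! (a + 1) > ?t ! b}"
  define X where "X = {(a, b). a < b \<and> b + 1 < ?L \<and> s ! a > s ! b \<and> s ! b > s ! (b + 1)}"
  have X': "(a, b) \<in> X' \<longleftrightarrow> a + 1 < b \<and> b < ?L
      \<and> s ! (?L - 1 - b) > s ! (?L - 2 - a) \<and> s ! (?L - 2 - a) > s ! (?L - 1 - a)" for a b
    using rev_compl_occurrence[OF small, of a b] by (auto simp: X'_def rev_compl_def)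
  have "bij_betw (\<lambda>(a, b). (?L - 1 - b, ?L - 2 - a)) X' X"
  proof (rule bij_betw_byWitness[where f' = "\<lambda>(a, b). (?L - 2 - b, ?L - 1 - a)"])
    show "\<forall>p\<in>X'. (\<lambda>(a, b). (?L - 2 - b, ?L - 1 - a)) ((\<lambda>(a, b). (?L - 1 - b, ?L - 2 - a)) p) = p"
      using X' by auto
    show "\<forall>p\<in>X. (\<lambda>(a, b). (?L - 1 - b, ?L - 2 - a)) ((\<lambda>(a, b). (?L - 2 - b, ?L - 1 - a)) p) = p"
      by (auto simp: X_def)
    show "(\<lambda>(a, b). (?L - 1 - b, ?L - 2 - a)) ` X' \<subseteq> X"
    proof clarify
      fix a b assume "(a, b) \<in> X'"
      moreover have "?L - 2 - a + 1 = ?L - 1 - a" if "a + 1 < b" "b < ?L" using that by simp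
      ultimately show "(?L - 1 - b, ?L - 2 - a) \<in> X" unfolding X' by (auto simp: X_def)
    qed
    show "(\<lambda>(a, b). (?L - 2 - b, ?L - 1 - a)) ` X \<subseteq> X'"
    proof clarify
      fix a b assume "(a, b) \<in> X"
      then have h: "a < b" "b + 1 < ?L" "s ! a > s ! b" "s ! b > s ! (b + 1)" by (auto simp: X_def)
      then have "?L - 2 - (?L - 2 - b) = b" "?L - 1 - (?L - 2 - b) = b + 1" "?L - 1 - (?L - 1 - a) = a"
        by auto
      then show "(?L - 2 - b, ?L - 1 - a) \<in> X'" unfolding X' using h by auto
    qed
  qed
  then have "card X' = card X" by (rule bij_betw_same_card)
  then show ?thesis unfolding f32_1_def f3_21_def X'_def X_def by simp
qed

section \<open>Lexicographic order on words\<close>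

lemma less_append_same_prefix [simp]:
  "(P @ xs < P @ ys) = (xs < (ys :: 'a :: linorder list))"
  by (induction P) auto

lemma sentinel_word_above:
  fixes s :: "'a :: linorder"
  assumes "\<forall>x\<in>set K. x < s" "P @ [s] < K @ [s]"
  shows "P @ zs < K @ [s]"
  using assms
proof (induction P arbitrary: K)
  case Nil
  then show ?case by (cases K) auto
next
  case (Cons p P)
  then show ?case by (cases K) auto
qed

lemma sentinel_word_below:
  fixes s :: "'a :: linorder"
  assumes "\<forall>x\<in>set K. x < s" "\<forall>x\<in>set P. x < s" "K @ [s] < P @ [s]"
  shows "(\<exists>v K'. K = P @ v # K') \<or> (\<forall>zs. K @ [s] < P @ zs)"
  using assms
proof (induction P arbitrary: K)
  case Nil
  then show ?case by (cases K) auto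
next
  case (Cons p P)
  then show ?case by (cases K) auto
qed

lemma ins_left_absent: "y \<notin> set A \<Longrightarrow> concat (map (\<lambda>z. if z = y then xs @ [z] else [z]) A) = A"
  by (induction A) auto

lemma ins_left_split:
  assumes "y \<notin> set A" "y \<notin> set B"
  shows "ins_left xs y (A @ y # B) = A @ xs @ y # B"
  using ins_left_absent[OF assms(1), of xs] ins_left_absent[OF assms(2), of xs]
  by (simp add: ins_left_def)

lemma iter_path_stable:
  "length (iter_path nx m x) \<le> Suc m \<and>
   (length (iter_path nx m x) < Suc m \<longrightarrow> (\<forall>m'\<ge>m. iter_path nx m' x = iter_path nx m x))"
proof (induction m arbitrary: x)
  case (Suc m)
  show ?case
  proof (cases "nx x")
    case None
    have "iter_path nx m' x = [x]" if "m' \<ge> Suc m" for m'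
      using that None by (cases m') auto
    then show ?thesis using None by simp
  next
    case (Some y)
    have unfold: "iter_path nx m' x = x # iter_path nx (m' - 1) y" if "m' \<ge> Suc m" for m'
      using that Some by (cases m') auto
    have "length (iter_path nx m y) \<le> Suc m" using Suc.IH[of y] by blast
    moreover have "iter_path nx m' x = iter_path nx (Suc m) x"
      if "length (iter_path nx (Suc m) x) < Suc (Suc m)" "Suc m \<le> m'" for m'
    proof -
      have "length (iter_path nx m y) < Suc m" using that(1) Some by simp
      then have stable: "\<forall>m''\<ge>m. iter_path nx m'' y = iter_path nx m y" using Suc.IH[of y] by blast
      have "m \<le> m' - 1" using that(2) by simp
      then have "iter_path nx (m' - 1) y = iter_path nx m y" using stable by blast
      then show ?thesis using unfold[OF that(2)] Some by simp
    qed
    ultimately show ?thesis using Some by simp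
  qed
qed simp

lemma common_suffix_len_sym: "common_suffix_len xs ys = common_suffix_len ys xs"
proof (induction xs ys rule: common_suffix_len.induct)
  case (1 xs ys)
  show ?case
    apply (subst common_suffix_len.simps)
    apply (subst (2) common_suffix_len.simps)
    using 1 by auto
qed

lemma common_suffix_len_Nil [simp]: "common_suffix_len xs [] = 0" "common_suffix_len [] xs = 0"
  by (subst common_suffix_len.simps; simp)+

lemma common_suffix_decomp:
  "\<exists>xs' ys' s. xs = xs' @ s \<and> ys = ys' @ s \<and> length s = common_suffix_len xs ys \<and>
     (xs' \<noteq> [] \<and> ys' \<noteq> [] \<longrightarrow> last xs' \<noteq> last ys')"
proof (induction xs ys rule: common_suffix_len.induct)
  case (1 xs ys)
  show ?case
  proof (cases "xs \<noteq> [] \<and> ys \<noteq> [] \<and> last xs = last ys")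
    case True
    then obtain xs' ys' s where h: "butlast xs = xs' @ s" "butlast ys = ys' @ s"
      "length s = common_suffix_len (butlast xs) (butlast ys)"
      "xs' \<noteq> [] \<and> ys' \<noteq> [] \<longrightarrow> last xs' \<noteq> last ys'" using 1 by blast
    have "xs = xs' @ (s @ [last xs])" using h(1) True append_butlast_last_id by fastforce
    moreover have "ys = ys' @ (s @ [last xs])" using h(2) True append_butlast_last_id by fastforce
    moreover have "length (s @ [last xs]) = common_suffix_len xs ys"
      using True h(3) by (subst common_suffix_len.simps) simp
    ultimately show ?thesis using h(4) by blast
  next
    case False
    then show ?thesis by (intro exI[of _ xs] exI[of _ ys] exI[of _ "[]"])
       (subst common_suffix_len.simps, auto)
  qed
qed
section \<open>Black and white dots of a permutation tableau\<close>

locale perm_tab =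
  fixes n :: nat and R :: "nat set" and f :: "nat \<Rightarrow> nat \<Rightarrow> bool"
  assumes tableau: "perm_tableau n R f"
begin

abbreviation "C \<equiv> cols n R"
abbreviation "cell \<equiv> is_cell n R"
abbreviation "brow \<equiv> top1 n R f"
abbreviation "wcol \<equiv> white_col n R f"
abbreviation "rrow \<equiv> restricted_row n R f"
abbreviation "urow \<equiv> unrestricted_row n R f"
abbreviation "restr0 \<equiv> restricted0 n R f"
abbreviation "nxt \<equiv> next_dot n R f"
abbreviation "path \<equiv> alt_path n R f"

lemma R_subset: "R \<subseteq> {1..n}"
  using tableau by (simp add: perm_tableau_def)

lemma col_not_row: "x \<in> C \<Longrightarrow> x \<notin> R"
  by (simp add: cols_def)

lemma row_cases: "i \<in> R \<Longrightarrow> rrow i \<or> urow i"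
  by (auto simp: restricted_row_def unrestricted_row_def)

lemma urow_not_rrow: "urow i \<Longrightarrow> \<not> rrow i"
  by (auto simp: restricted_row_def unrestricted_row_def)

lemma urow_row: "urow i \<Longrightarrow> i \<in> R"
  by (simp add: unrestricted_row_def)

lemma rrow_row: "rrow i \<Longrightarrow> i \<in> R"
  by (simp add: restricted_row_def)

lemma filling_cond:
  "cell i j \<Longrightarrow> \<not> f i j \<Longrightarrow> cell i' j \<Longrightarrow> i' < i \<Longrightarrow> f i' j
   \<Longrightarrow> cell i j' \<Longrightarrow> j < j' \<Longrightarrow> \<not> f i j'"
  using tableau unfolding perm_tableau_def by blast

lemma black_props:
  assumes "j \<in> C"
  shows "cell (brow j) j" "f (brow j) j" "\<And>i. cell i j \<Longrightarrow> f i j \<Longrightarrow> brow j \<le> i"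
proof -
  let ?S = "{i. cell i j \<and> f i j}"
  have fin: "finite ?S" by (rule finite_subset[of _ "{..<j}"]) (auto simp: is_cell_def)
  have ne: "?S \<noteq> {}" using tableau assms unfolding perm_tableau_def by blast
  have "brow j \<in> ?S" unfolding top1_def using Min_in[OF fin ne] .
  then show "cell (brow j) j" "f (brow j) j" by auto
  show "\<And>i. cell i j \<Longrightarrow> f i j \<Longrightarrow> brow j \<le> i" unfolding top1_def using fin by simp
qed

lemma black_lt: "j \<in> C \<Longrightarrow> brow j < j \<and> brow j \<in> R"
  using black_props(1) by (simp add: is_cell_def)

lemma white_props:
  assumes "rrow i"
  shows "restr0 i (wcol i)" "\<And>j. restr0 i j \<Longrightarrow> wcol i \<le> j"
proof -
  let ?S = "{j. restr0 i j}"
  have fin: "finite ?S"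
    by (rule finite_subset[of _ "{..n}"]) (auto simp: restricted0_def is_cell_def cols_def)
  have ne: "?S \<noteq> {}" using assms by (auto simp: restricted_row_def)
  show "restr0 i (wcol i)" unfolding white_col_def using Min_in[OF fin ne] by simp
  show "\<And>j. restr0 i j \<Longrightarrow> wcol i \<le> j" unfolding white_col_def using fin by simp
qed

lemma black_above_restricted0: "restr0 g j \<Longrightarrow> brow j < g"
proof -
  assume r: "restr0 g j"
  then obtain i' where i': "cell i' j" "i' < g" "f i' j" by (auto simp: restricted0_def)
  have "j \<in> C" using r by (auto simp: restricted0_def is_cell_def)
  then show ?thesis using black_props(3)[OF _ i'(1) i'(3)] i'(2) by simp
qed

lemma white_facts: "rrow i \<Longrightarrow> wcol i \<in> C \<and> i < wcol i \<and> i \<in> R \<and> brow (wcol i) < i"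
  using white_props(1) black_above_restricted0
  by (auto simp: restricted0_def is_cell_def)

text \<open>If the row of the black dot of column j is restricted, its white dot lies to
  the left of column j: otherwise condition (ii) would be violated.\<close>
lemma col_lt_white_of_brow:
  assumes "j \<in> C" "rrow (brow j)"
  shows "j < wcol (brow j)"
proof -
  let ?t = "brow j"
  have r: "restr0 ?t (wcol ?t)" using white_props(1)[OF assms(2)] .
  then obtain i' where i': "cell i' (wcol ?t)" "i' < ?t" "f i' (wcol ?t)"
    and c: "cell ?t (wcol ?t)" "\<not> f ?t (wcol ?t)"
    by (auto simp: restricted0_def)
  have "j \<noteq> wcol ?t" using c(2) black_props(2)[OF assms(1)] by auto
  moreover have "\<not> wcol ?t < j"
    using filling_cond[OF c i'(1) i'(2) i'(3) black_props(1)[OF assms(1)]] black_props(2)[OF assms(1)]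
    by blast
  ultimately show ?thesis by simp
qed

end

section \<open>Alternating paths and routes\<close>

context perm_tab
begin

text \<open>The labels carrying a dot are the column labels and the restricted rows;
  exactly for them the alternating path is nonempty.  succ x is the label of the
  dot following x on its path, or the unrestricted row in which the path ends.
  height decreases along paths and makes them finite.\<close>
definition dotted :: "nat \<Rightarrow> bool" where "dotted x \<longleftrightarrow> x \<in> C \<or> rrow x"
definition succ :: "nat \<Rightarrow> nat" where "succ x = (if x \<in> R then wcol x else brow x)"
definition height :: "nat \<Rightarrow> nat" where "height x = (if x \<in> R then 2*x else 2 * brow x + 1)"
definition label :: "nat \<Rightarrow> bool" where "label x \<longleftrightarrow> dotted x \<or> urow x"

lemma dotted_range: "dotted x \<Longrightarrow> x \<in> {1..n}"
  using R_subset by (auto simp: dotted_def cols_def restricted_row_def)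

lemma label_range: "label x \<Longrightarrow> x \<in> {1..n}"
  using R_subset dotted_range by (auto simp: label_def unrestricted_row_def)

lemma dotted_iff: "x \<in> {1..n} \<Longrightarrow> \<not> urow x \<Longrightarrow> dotted x"
  using row_cases by (auto simp: dotted_def cols_def)

lemma dotted_not_urow: "dotted x \<Longrightarrow> \<not> urow x"
  by (auto simp: dotted_def cols_def unrestricted_row_def restricted_row_def)

lemma label_dotted: "label y \<Longrightarrow> \<not> urow y \<Longrightarrow> dotted y"
  by (simp add: label_def)

lemma brow_label: "j \<in> C \<Longrightarrow> label (brow j)"
  using black_lt row_cases by (auto simp: label_def dotted_def)

lemma succ_label: "dotted x \<Longrightarrow> label (succ x) \<and> height (succ x) < height x"
proof -
  assume d: "dotted x"
  show ?thesis
  proof (cases "x \<in> C")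
    case True
    then have "brow x \<in> R" "brow x < x" using black_lt by auto
    then show ?thesis using True row_cases[of "brow x"] col_not_row[OF True]
      by (auto simp: succ_def height_def label_def dotted_def)
  next
    case False
    then have r: "rrow x" "x \<in> R" using d rrow_row by (auto simp: dotted_def)
    then have "wcol x \<in> C" "brow (wcol x) < x" using white_facts by auto
    then show ?thesis using r col_not_row[of "wcol x"] by (auto simp: succ_def height_def label_def dotted_def)
  qed
qed

lemma nxt_dotted: "dotted x \<Longrightarrow> nxt x = (if urow (succ x) then None else Some (succ x))"
proof -
  assume d: "dotted x"
  show ?thesis
  proof (cases "x \<in> C")
    case True
    then have "brow x \<in> R" using black_lt by auto
    then show ?thesis using True col_not_row[OF True] row_cases[of "brow x"] urow_not_rrow
      by (auto simp: next_dot_def succ_def)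
  next
    case False
    then have r: "rrow x" "x \<in> R" using d rrow_row by (auto simp: dotted_def)
    then have "wcol x \<in> C" using white_facts by auto
    then show ?thesis using r col_not_row[of "wcol x"] by (auto simp: next_dot_def succ_def unrestricted_row_def)
  qed
qed

lemma label_induct [consumes 1, case_names urow dotted]:
  assumes "label x"
    and "\<And>x. urow x \<Longrightarrow> P x"
    and "\<And>x. dotted x \<Longrightarrow> P (succ x) \<Longrightarrow> P x"
  shows "P x"
  using assms(1)
proof (induction "height x" arbitrary: x rule: less_induct)
  case less
  show ?case
  proof (cases "urow x")
    case False
    then have "dotted x" using less.prems by (simp add: label_def)
    then show ?thesis using less.hyps succ_label assms(3) by blast
  qed (rule assms(2))
qed

lemma nxt_step: "dotted x \<Longrightarrow> nxt x = Some y \<Longrightarrow> dotted y \<and> height y < height x"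
  using nxt_dotted succ_label label_dotted by (metis option.distinct(1) option.inject)

lemma iter_path_dotted:
  "dotted x \<Longrightarrow> distinct (iter_path nxt m x) \<and>
     (\<forall>z\<in>set (iter_path nxt m x). dotted z \<and> height z \<le> height x)"
proof (induction m arbitrary: x)
  case (Suc m)
  show ?case
  proof (cases "nxt x")
    case (Some y)
    have y: "dotted y" "height y < height x" using nxt_step[OF Suc.prems Some] by auto
    then have "x \<notin> set (iter_path nxt m y)" using Suc.IH[of y] by fastforce
    then show ?thesis using Some Suc.prems Suc.IH[OF y(1)] y(2) by fastforce
  qed (use Suc.prems in simp)
qed simp

lemma iter_path_length: "dotted x \<Longrightarrow> length (iter_path nxt m x) \<le> n"
proof -
  assume d: "dotted x"
  have "set (iter_path nxt m x) \<subseteq> {1..n}" using iter_path_dotted[OF d] dotted_range by blast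
  then have "card (set (iter_path nxt m x)) \<le> n" using card_mono[of "{1..n}"] by fastforce
  then show ?thesis using iter_path_dotted[OF d] distinct_card by metis
qed

lemma iter_path_fuel: "dotted x \<Longrightarrow> m' \<ge> n \<Longrightarrow> iter_path nxt m' x = iter_path nxt n x"
proof -
  assume d: "dotted x" and m: "m' \<ge> n"
  have "length (iter_path nxt n x) < Suc n" using iter_path_length[OF d, of n] by simp
  then show ?thesis using iter_path_stable[of nxt n x] m by blast
qed

lemma path_dotted: "dotted x \<Longrightarrow> path x = x # (if urow (succ x) then [] else path (succ x))"
proof -
  assume d: "dotted x"
  have n1: "n \<ge> 1" using dotted_range[OF d] by auto
  then obtain k where k: "n = Suc k" by (cases n) auto
  have ap: "path x = iter_path nxt n x" using dotted_not_urow[OF d] by (simp add: alt_path_def)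
  have it: "iter_path nxt n x = x # (case nxt x of None \<Rightarrow> [] | Some y \<Rightarrow> iter_path nxt k y)"
    unfolding k by (rule iter_path.simps(2))
  show ?thesis
  proof (cases "urow (succ x)")
    case True
    then have "nxt x = None" using nxt_dotted[OF d] by simp
    then show ?thesis using ap it True by simp
  next
    case False
    have y: "dotted (succ x)" using succ_label[OF d] False label_dotted by blast
    have nxs: "nxt x = Some (succ x)" using nxt_dotted[OF d] False by simp
    have e1: "iter_path nxt n x = x # iter_path nxt k (succ x)" using it nxs by simp
    have e2: "iter_path nxt (Suc n) x = x # iter_path nxt n (succ x)" using nxs by simp
    have "iter_path nxt (Suc n) x = iter_path nxt n x" using iter_path_fuel[OF d, of "Suc n"] by simp
    then have "iter_path nxt n (succ x) = iter_path nxt k (succ x)" using e1 e2 by simp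
    moreover have "path (succ x) = iter_path nxt n (succ x)" using dotted_not_urow[OF y] by (simp add: alt_path_def)
    ultimately show ?thesis using ap e1 False by simp
  qed
qed

lemma path_urow: "urow x \<Longrightarrow> path x = []" by (simp add: alt_path_def)

definition route :: "nat \<Rightarrow> nat list" where
  "route x = (if urow x then [x] else path x @ [brow (last (path x))])"

lemma route_urow: "urow x \<Longrightarrow> route x = [x]" by (simp add: route_def)

lemma route_dotted: "dotted x \<Longrightarrow> route x = x # route (succ x)"
proof -
  assume d: "dotted x"
  show ?thesis
  proof (cases "urow (succ x)")
    case True
    have "x \<notin> R"
    proof
      assume "x \<in> R" then have "rrow x" using d by (auto simp: dotted_def cols_def)
      then have "succ x \<in> C" using white_facts \<open>x \<in> R\<close> by (simp add: succ_def)
      then show False using True urow_row col_not_row by blast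
    qed
    then show ?thesis using True path_dotted[OF d] dotted_not_urow[OF d] by (simp add: route_def route_urow succ_def)
  next
    case False
    have y: "dotted (succ x)" using succ_label[OF d] False label_dotted by blast
    have "path (succ x) \<noteq> []" using path_dotted[OF y] by simp
    then show ?thesis using False path_dotted[OF d] dotted_not_urow[OF d] dotted_not_urow[OF y] by (simp add: route_def)
  qed
qed

lemma route_Cons: "label x \<Longrightarrow> route x = x # tl (route x)"
  by (induction rule: label_induct) (simp_all add: route_urow route_dotted)

lemma route_labels: "label x \<Longrightarrow> set (route x) \<subseteq> Collect label"
  by (induction rule: label_induct) (auto simp: route_urow route_dotted label_def)

lemma route_range: "label x \<Longrightarrow> set (route x) \<subseteq> {1..n}"
  using route_labels label_range by blast

lemma route_last: "label x \<Longrightarrow> urow (last (route x))"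
proof (induction rule: label_induct)
  case (dotted x)
  then have "route (succ x) \<noteq> []" using route_Cons succ_label by (metis list.discI)
  then show ?case using dotted route_dotted by simp
qed (simp add: route_urow)

lemma route_suffix: "label x \<Longrightarrow> route x = xs @ y # ys \<Longrightarrow> route y = y # ys"
proof (induction arbitrary: xs rule: label_induct)
  case (urow x)
  then show ?case by (cases xs) (auto simp: route_urow)
next
  case (dotted x)
  then show ?case by (cases xs) (auto simp: route_dotted)
qed

lemma route_step:
  assumes "label a" "route a = xs @ c # y # zs"
  shows "dotted c \<and> succ c = y"
proof -
  have rc: "route c = c # y # zs" using route_suffix[OF assms] .
  have "label c" using route_labels[OF assms(1)] assms(2) by auto
  moreover have "\<not> urow c" using rc route_urow by auto
  ultimately have d: "dotted c" by (simp add: label_def)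
  then have "route (succ c) = y # zs" using route_dotted rc by simp
  then show ?thesis using route_Cons[of "succ c"] succ_label[OF d] d by simp
qed

lemma route_cols_ge:
  assumes "label y"
  shows "x \<in> set (route y) \<Longrightarrow> x \<in> C \<Longrightarrow> y \<le> x \<and> (rrow y \<longrightarrow> wcol y \<le> x)"
  using assms
proof (induction rule: label_induct)
  case (urow y)
  then show ?case using route_urow urow_row col_not_row by fastforce
next
  case (dotted y)
  show ?case
  proof (cases "x = y")
    case True
    then show ?thesis using dotted.prems col_not_row rrow_row by blast
  next
    case False
    then have xin: "x \<in> set (route (succ y))" using route_dotted[OF dotted.hyps] dotted.prems by simp
    note ih = dotted.IH[OF xin dotted.prems(2)]
    show ?thesis
    proof (cases "y \<in> C")
      case True
      then have t: "succ y = brow y" using col_not_row by (simp add: succ_def)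
      have "\<not> urow (brow y)"
        using xin t route_urow dotted.prems(2) urow_row col_not_row by fastforce
      then have "rrow (brow y)" using black_lt[OF True] row_cases by blast
      then have "y < wcol (brow y)" using col_lt_white_of_brow[OF True] by simp
      moreover have "wcol (brow y) \<le> x" using ih t \<open>rrow (brow y)\<close> by simp
      moreover have "\<not> rrow y" using True col_not_row rrow_row by blast
      ultimately show ?thesis by simp
    next
      case False
      then have r: "rrow y" "y \<in> R" using dotted.hyps rrow_row by (auto simp: dotted_def)
      then have "succ y = wcol y" by (simp add: succ_def)
      then show ?thesis using ih r white_facts[of y] by auto
    qed
  qed
qed

end

section \<open>Keys\<close>

context perm_tab
begin

definition enc :: "nat \<Rightarrow> nat" where "enc x = (if x \<in> R then x else 2*n+1-x)"
definition sentinel :: nat where "sentinel = 2*n+1"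
definition key :: "nat \<Rightarrow> nat list" where "key x = map enc (rev (route x)) @ [sentinel]"

lemma enc_row: "c \<in> R \<Longrightarrow> enc c = c"
  by (simp add: enc_def)

lemma enc_col: "c \<in> C \<Longrightarrow> enc c = 2*n+1-c"
  using col_not_row by (simp add: enc_def)

lemma enc_inj: "x \<in> {1..n} \<Longrightarrow> y \<in> {1..n} \<Longrightarrow> enc x = enc y \<Longrightarrow> x = y"
  by (auto simp: enc_def split: if_splits)

lemma map_enc_inj:
  "set xs \<subseteq> {1..n} \<Longrightarrow> set ys \<subseteq> {1..n} \<Longrightarrow> map enc xs = map enc ys \<Longrightarrow> xs = ys"
proof (induction xs arbitrary: ys)
  case (Cons x xs)
  then obtain y ys' where y: "ys = y # ys'" by (cases ys) auto
  have "x = y" using Cons.prems y enc_inj[of x y] by simp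
  moreover have "xs = ys'" using Cons.prems y Cons.IH[of ys'] by simp
  ultimately show ?case using y by simp
qed simp

lemma enc_lt_sentinel: "x \<in> {1..n} \<Longrightarrow> enc x < sentinel"
  by (auto simp: enc_def sentinel_def)

lemma route_enc_lt_sentinel: "label x \<Longrightarrow> \<forall>v\<in>set (map enc (rev (route x))). v < sentinel"
  using route_range enc_lt_sentinel by fastforce

lemma key_dotted: "dotted x \<Longrightarrow> key x = map enc (rev (route (succ x))) @ [enc x, sentinel]"
  using route_dotted by (simp add: key_def)

end

section \<open>The construction xi sorts the labels by key\<close>

context perm_tab
begin

definition placed :: "nat \<Rightarrow> nat set" where
  "placed m = {x. urow x} \<union> {c \<in> C. m < c} \<union> {i. rrow i \<and> m < wcol i}"

definition adj_ok :: "nat \<Rightarrow> nat \<Rightarrow> bool" where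
  "adj_ok x y \<longleftrightarrow> (x \<in> R \<longrightarrow> x < y) \<and> (x \<notin> R \<longrightarrow> y < x)"

definition xi_inv :: "nat \<Rightarrow> nat list \<Rightarrow> bool" where
  "xi_inv m W \<longleftrightarrow> distinct W \<and> set W = placed m \<and> sorted_wrt (\<lambda>a b. key a < key b) W
     \<and> successively adj_ok W \<and> (W \<noteq> [] \<longrightarrow> last W \<in> R)"

lemma placed_label: "x \<in> placed m \<Longrightarrow> label x"
  by (auto simp: placed_def label_def dotted_def)

text \<open>When column j is processed, every placed label whose key is below that of
  brow j stays below the key of j: a route through brow j arrives there from a
  column c > m \<ge> j, whose code is smaller than that of j.\<close>
lemma key_below_prefix:
  assumes j: "j \<in> C" "j \<le> m" and a: "a \<in> placed m" and less: "key a < key (brow j)"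
  shows "key a < map enc (rev (route (brow j))) @ enc j # zs"
proof -
  define P where "P = map enc (rev (route (brow j)))"
  have la: "label a" using placed_label[OF a] .
  have lt: "label (brow j)" using brow_label[OF j(1)] .
  from sentinel_word_below[OF route_enc_lt_sentinel[OF la] route_enc_lt_sentinel[OF lt]]
  consider (ext) v K where "map enc (rev (route a)) = P @ v # K"
    | (all) "\<forall>zs. key a < P @ zs"
    using less unfolding key_def P_def by blast
  then show ?thesis
  proof cases
    case ext
    then obtain us c vs where uv: "rev (route a) = us @ c # vs" "P = map enc us" "v = enc c"
      by (auto simp: map_eq_append_conv)
    have "us = rev (route (brow j))"
      using map_enc_inj[of us] route_range[OF la] route_range[OF lt] uv P_def
      by (metis Un_subset_iff set_append set_rev)
    then have "route a = rev vs @ c # route (brow j)"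
      using arg_cong[OF uv(1), of rev] by simp
    moreover obtain rest where "route (brow j) = brow j # rest" using route_Cons[OF lt] by blast
    ultimately have "route a = rev vs @ c # brow j # rest" by simp
    then have cs: "dotted c" "succ c = brow j" using route_step[OF la] by auto
    have cC: "c \<in> C"
      using cs black_lt[OF j(1)] white_facts col_not_row by (metis dotted_def succ_def)
    have cin: "c \<in> set (route a)" using uv(1) by (metis in_set_conv_decomp set_rev)
    have ge: "a \<le> c \<and> (rrow a \<longrightarrow> wcol a \<le> c)" using route_cols_ge[OF la cin cC] .
    have "m < c"
      using a ge cin cC route_urow[of a] urow_row[of a] col_not_row[of c] by (auto simp: placed_def)
    then have "enc c < enc j" using j cC by (auto simp: enc_col cols_def)
    moreover have "key a = P @ v # K @ [sentinel]" using ext by (simp add: key_def)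
    ultimately show ?thesis using uv(3) by (simp add: P_def)
  next
    case all
    then show ?thesis by (simp add: P_def)
  qed
qed

text \<open>The letters inserted when column j is processed: j itself, just left of
  brow j, and the rows whose white dot lies in column j, just left of j.\<close>
definition wrows :: "nat \<Rightarrow> nat set" where
  "wrows j = {i. rrow i \<and> wcol i = j}"

lemma wrows_facts:
  assumes "g \<in> wrows j"
  shows "rrow g \<and> g \<in> R \<and> g < j \<and> brow j < g"
  using assms white_facts[of g] black_above_restricted0[OF white_props(1)[of g]] rrow_row
  by (auto simp: wrows_def)

lemma finite_wrows: "finite (wrows j)"
  by (rule finite_subset[of _ R]) (auto simp: wrows_def dest: rrow_row intro: finite_subset[OF R_subset])

definition stem :: "nat \<Rightarrow> nat list" where
  "stem j = map enc (rev (route (brow j)))"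

lemma key_brow: "key (brow j) = stem j @ [sentinel]"
  by (simp add: key_def stem_def)

lemma key_col: "j \<in> C \<Longrightarrow> key j = stem j @ [enc j, sentinel]"
  using key_dotted[of j] col_not_row by (simp add: dotted_def succ_def stem_def)

lemma key_wrow:
  assumes "g \<in> wrows j"
  shows "key g = stem j @ [enc j, g, sentinel]"
proof -
  have g: "rrow g" "wcol g = j" "g \<in> R" using assms rrow_row by (auto simp: wrows_def)
  then have "j \<in> C" using white_facts by blast
  then have "route j = j # route (brow j)" using route_dotted[of j] col_not_row by (simp add: dotted_def succ_def)
  moreover have "route g = g # route j" using route_dotted[of g] g by (simp add: dotted_def succ_def)
  ultimately show ?thesis using g by (simp add: key_def stem_def enc_row)
qed

lemma placed_step:
  assumes j: "j \<in> C" "j \<le> m" and gap: "\<forall>c\<in>C. j < c \<longrightarrow> m < c"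
  shows "placed (j - 1) = placed m \<union> {j} \<union> wrows j"
    and "j \<notin> placed m" and "placed m \<inter> wrows j = {}"
proof -
  have j1: "1 \<le> j" using j(1) by (simp add: cols_def)
  have "{c \<in> C. j - 1 < c} = {c \<in> C. m < c} \<union> {j}"
    using j gap j1 by fastforce
  moreover have "{i. rrow i \<and> j - 1 < wcol i} = {i. rrow i \<and> m < wcol i} \<union> wrows j"
    using gap j j1 white_facts by (fastforce simp: wrows_def)
  ultimately show "placed (j - 1) = placed m \<union> {j} \<union> wrows j"
    unfolding placed_def by auto
  show "j \<notin> placed m"
    using j col_not_row by (auto simp: placed_def unrestricted_row_def restricted_row_def)
  have "g \<notin> placed m" if "g \<in> wrows j" for g
  proof -
    have "rrow g" "wcol g = j" "g \<in> R" using that rrow_row by (auto simp: wrows_def)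
    then show ?thesis using j(2) urow_not_rrow col_not_row by (auto simp: placed_def)
  qed
  then show "placed m \<inter> wrows j = {}" by blast
qed

text \<open>brow j is already placed: it is unrestricted, or its white dot lies left of j.\<close>
lemma brow_placed:
  assumes j: "j \<in> C" and gap: "\<forall>c\<in>C. j < c \<longrightarrow> m < c"
  shows "brow j \<in> placed m"
proof (cases "urow (brow j)")
  case False
  then have "rrow (brow j)" using row_cases black_lt[OF j] by blast
  then show ?thesis
    using col_lt_white_of_brow[OF j] white_facts gap by (auto simp: placed_def)
qed (simp add: placed_def)

lemma xi_step_split:
  assumes "j \<notin> set (A @ brow j # B)" "brow j \<notin> set A" "brow j \<notin> set B"
  shows "xi_step n R f j (A @ brow j # B) = A @ sorted_list_of_set (wrows j) @ j # brow j # B"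
proof -
  have "ins_left [j] (brow j) (A @ brow j # B) = A @ j # brow j # B"
    using ins_left_split[OF assms(2,3)] by simp
  moreover have "j \<notin> set A" "j \<notin> set (brow j # B)" using assms(1) by auto
  ultimately show ?thesis
    using ins_left_split[of j A "brow j # B"] by (simp add: xi_step_def wrows_def)
qed

text \<open>Processing column j keeps the word sorted by key: the new letters have keys
  between those of A and that of brow j.\<close>
lemma xi_step_sorted:
  assumes j: "j \<in> C" "j \<le> m" and AB: "set (A @ brow j # B) = placed m"
    and sorted: "sorted_wrt (\<lambda>a b. key a < key b) (A @ brow j # B)"
  shows "sorted_wrt (\<lambda>a b. key a < key b) (A @ sorted_list_of_set (wrows j) @ j # brow j # B)"
proof -
  let ?G = "sorted_list_of_set (wrows j)"
  have setG: "set ?G = wrows j" using finite_wrows by simp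
  have below: "key a < stem j @ enc j # zs" if "a \<in> set A" for a zs
  proof -
    have "key a < key (brow j)" using that sorted by (simp add: sorted_wrt_append)
    then show ?thesis using key_below_prefix[OF j, of a] that AB by (auto simp: stem_def)
  qed
  have above: "stem j @ zs < key b" if "b \<in> set B" for b zs
  proof -
    have "label b" using that AB placed_label by auto
    moreover have "stem j @ [sentinel] < key b"
      using that sorted key_brow by (simp add: sorted_wrt_append)
    ultimately show ?thesis
      using sentinel_word_above route_enc_lt_sentinel by (metis key_def)
  qed
  have encj: "enc j < sentinel" using j(1) enc_lt_sentinel by (simp add: cols_def)
  have Gsmall: "g < sentinel" if "g \<in> wrows j" for g
    using wrows_facts[OF that] j(1) by (auto simp: sentinel_def cols_def)
  have sG: "sorted_wrt (\<lambda>a b. key a < key b) ?G"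
    by (rule sorted_wrt_mono_rel[OF _ strict_sorted_list_of_set]) (use key_wrow setG in simp)
  have sjB: "sorted_wrt (\<lambda>a b. key a < key b) (j # brow j # B)"
    using sorted above key_col[OF j(1)] key_brow encj by (simp add: sorted_wrt_append)
  have sGjB: "sorted_wrt (\<lambda>a b. key a < key b) (?G @ j # brow j # B)"
    unfolding sorted_wrt_append
    using sG sjB above key_wrow key_col[OF j(1)] key_brow setG Gsmall by auto
  have AG: "key a < key g" if "a \<in> set A" "g \<in> set (?G @ j # brow j # B)" for a g
    using that below key_wrow key_col[OF j(1)] key_brow setG sorted
    by (auto simp: sorted_wrt_append)
  show ?thesis
    using sGjB sorted AG by (simp add: sorted_wrt_append)
qed

text \<open>Processing column j keeps the up/down pattern: the inserted rows are larger
  than brow j and smaller than j, and j exceeds brow j.\<close>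
lemma xi_step_adj:
  assumes j: "j \<in> C" "j \<le> m" and AB: "set (A @ brow j # B) = placed m"
    and adj: "successively adj_ok (A @ brow j # B)"
  shows "successively adj_ok (A @ sorted_list_of_set (wrows j) @ j # brow j # B)"
proof -
  let ?G = "sorted_list_of_set (wrows j)" and ?t = "brow j"
  have setG: "set ?G = wrows j" using finite_wrows by simp
  have tR: "?t \<in> R" using black_lt[OF j(1)] by simp
  have G: "g \<in> R \<and> g < j \<and> ?t < g" if "g \<in> set ?G" for g
    using wrows_facts that setG by blast
  have sucG: "successively adj_ok ?G"
  proof (rule successively_if_sorted_wrt)
    show "sorted_wrt adj_ok ?G"
      by (rule sorted_wrt_mono_rel[OF _ strict_sorted_list_of_set]) (use G in \<open>auto simp: adj_ok_def\<close>)
  qed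
  have sucB: "successively adj_ok (?t # B)" using adj by (auto simp: successively_append_iff)
  have sucGjB: "successively adj_ok (?G @ j # ?t # B)"
    using sucG sucB tR col_not_row[OF j(1)] black_lt[OF j(1)] G[of "last ?G"]
    by (auto simp: successively_append_iff adj_ok_def)
  define h where "h = hd (?G @ j # ?t # B)"
  have h: "?t < h \<and> h \<le> j"
  proof (cases ?G)
    case (Cons g G')
    then show ?thesis using G[of g] by (simp add: h_def)
  qed (use black_lt[OF j(1)] in \<open>simp add: h_def\<close>)
  have last_A: "adj_ok (last A) h" if "A \<noteq> []"
  proof (cases "last A \<in> R")
    case True
    have "adj_ok (last A) ?t" using adj that by (simp add: successively_append_iff)
    then have "last A < ?t" using True by (simp add: adj_ok_def)
    then have "last A < h" using h by linarith
    then show ?thesis unfolding adj_ok_def using True by blast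
  next
    case False
    have "last A \<in> set (A @ ?t # B)" using that by simp
    then have "last A \<in> placed m" using AB by blast
    then have "m < last A" using False by (auto simp: placed_def unrestricted_row_def restricted_row_def)
    then have "h < last A" using h j(2) by linarith
    then show ?thesis unfolding adj_ok_def using False by blast
  qed
  show ?thesis
    using adj sucGjB last_A unfolding h_def by (auto simp: successively_append_iff)
qed

lemma xi_step_inv:
  assumes j: "j \<in> C" "j \<le> m" and gap: "\<forall>c\<in>C. j < c \<longrightarrow> m < c" and I: "xi_inv m W"
  shows "xi_inv (j - 1) (xi_step n R f j W)"
proof -
  let ?G = "sorted_list_of_set (wrows j)" and ?t = "brow j"
  have dist: "distinct W" and setW: "set W = placed m" and sorted: "sorted_wrt (\<lambda>a b. key a < key b) W"
    and adj: "successively adj_ok W" and last: "W \<noteq> [] \<longrightarrow> last W \<in> R"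
    using I by (auto simp: xi_inv_def)
  obtain A B where W: "W = A @ ?t # B"
    using brow_placed[OF j(1) gap] setW by (metis split_list)
  have jW: "j \<notin> set W" using placed_step(2)[OF j gap] setW by simp
  have new: "xi_step n R f j W = A @ ?G @ j # ?t # B"
    using xi_step_split[of j A B] jW dist W by simp
  have "set (A @ ?G @ j # ?t # B) = placed (j - 1)"
    using placed_step(1)[OF j gap] setW W finite_wrows by auto
  moreover have "distinct (A @ ?G @ j # ?t # B)"
    using dist W jW placed_step(3)[OF j gap] setW finite_wrows wrows_facts col_not_row[OF j(1)]
    by auto
  moreover have "sorted_wrt (\<lambda>a b. key a < key b) (A @ ?G @ j # ?t # B)"
    using xi_step_sorted[OF j] setW sorted W by simp
  moreover have "successively adj_ok (A @ ?G @ j # ?t # B)"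
    using xi_step_adj[OF j] setW adj W by simp
  moreover have "last (A @ ?G @ j # ?t # B) \<in> R" using last W by simp
  ultimately show ?thesis unfolding xi_inv_def new by simp
qed

lemma fold_xi_step_inv:
  "sorted_wrt (>) cs \<Longrightarrow> set cs = {c \<in> C. c \<le> m} \<Longrightarrow> xi_inv m W \<Longrightarrow> xi_inv 0 (fold (xi_step n R f) cs W)"
proof (induction cs arbitrary: m W)
  case Nil
  have "placed m = placed 0"
  proof -
    have nc: "\<And>c. c \<in> C \<Longrightarrow> m < c" using Nil.prems(2) by (metis (mono_tags, lifting) empty_iff empty_set mem_Collect_eq not_le_imp_less)
    have c0: "\<And>c. c \<in> C \<Longrightarrow> 0 < c" by (simp add: cols_def)
    have "\<And>i. rrow i \<Longrightarrow> wcol i \<in> C" using white_facts by blast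
    then show ?thesis unfolding placed_def using nc c0 by blast
  qed
  then show ?case using Nil.prems(3) by (simp add: xi_inv_def)
next
  case (Cons j cs)
  have jC: "j \<in> C" "j \<le> m" using Cons.prems(2) by auto
  have csj: "\<And>c. c \<in> set cs \<Longrightarrow> c < j" using Cons.prems(1) by simp
  have gap: "\<forall>c\<in>C. j < c \<longrightarrow> m < c"
  proof (intro ballI impI)
    fix c assume c: "c \<in> C" "j < c"
    show "m < c"
    proof (rule ccontr)
      assume "\<not> m < c"
      then have "c \<in> set (j # cs)" using Cons.prems(2) c by auto
      then have "c \<in> set cs" using c by auto
      then have "c < j" by (rule csj)
      then show False using c by simp
    qed
  qed
  have set': "set cs = {c \<in> C. c \<le> j - 1}"
  proof (intro set_eqI iffI)
    fix c assume c: "c \<in> set cs"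
    then have "c < j" "c \<in> C" using csj Cons.prems(2) by auto
    then show "c \<in> {c \<in> C. c \<le> j - 1}" by auto
  next
    fix c assume "c \<in> {c \<in> C. c \<le> j - 1}"
    then have c: "c \<in> C" "c < j" using jC by (auto simp: cols_def)
    then have "c \<in> set (j # cs)" using Cons.prems(2) jC by auto
    then show "c \<in> set cs" using c by auto
  qed
  have "xi_inv (j - 1) (xi_step n R f j W)" using xi_step_inv[OF jC gap Cons.prems(3)] .
  then show ?case using Cons.IH[OF _ set'] Cons.prems(1) by simp
qed

lemma placed_n: "placed n = {x. urow x}"
proof -
  have "\<And>c. c \<in> C \<Longrightarrow> c \<le> n" by (simp add: cols_def)
  moreover have "\<And>i. rrow i \<Longrightarrow> wcol i \<le> n" using white_facts by (fastforce simp: cols_def)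
  ultimately show ?thesis unfolding placed_def by force
qed

lemma placed_0: "placed 0 = {1..n}"
proof -
  have "{1..n} = R \<union> C" using R_subset by (auto simp: cols_def)
  moreover have "R = {x. urow x} \<union> {i. rrow i}" using row_cases urow_row rrow_row by blast
  moreover have "\<And>i. rrow i \<Longrightarrow> 0 < wcol i" using white_facts by fastforce
  moreover have "\<And>c. c \<in> C \<Longrightarrow> 0 < c" by (simp add: cols_def)
  ultimately show ?thesis unfolding placed_def by blast
qed

lemma xi_inv_init: "xi_inv n (sorted_list_of_set {x. urow x})"
proof -
  let ?U = "{x. urow x}"
  have fin: "finite ?U" by (rule finite_subset[OF _ finite_subset[OF R_subset]]) (auto simp: urow_row)
  let ?W = "sorted_list_of_set ?U"
  have sW: "sorted_wrt (<) ?W" by (simp add: strict_sorted_list_of_set)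
  have setW: "set ?W = ?U" using fin by simp
  have ku: "key u = [u, sentinel]" if "u \<in> set ?W" for u
  proof -
    have "urow u" using that setW by simp
    then show ?thesis using urow_row by (simp add: key_def route_urow enc_def)
  qed
  have s1: "sorted_wrt (\<lambda>a b. key a < key b) ?W"
    by (rule sorted_wrt_mono_rel[OF _ sW]) (simp add: ku)
  have s2: "successively adj_ok ?W"
  proof -
    have "sorted_wrt adj_ok ?W"
      by (rule sorted_wrt_mono_rel[OF _ sW]) (use setW urow_row in \<open>auto simp: adj_ok_def\<close>)
    then show ?thesis by (rule successively_if_sorted_wrt)
  qed
  have s3: "?W \<noteq> [] \<longrightarrow> last ?W \<in> R"
    using setW urow_row last_in_set by blast
  show ?thesis unfolding xi_inv_def using s1 s2 s3 setW placed_n by simp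
qed

lemma xi_invariant: "xi_inv 0 (xi n R f)"
proof -
  have finC: "finite C" by (simp add: cols_def)
  have "sorted_wrt (>) (rev (sorted_list_of_set C))"
    by (simp add: sorted_wrt_rev strict_sorted_list_of_set)
  moreover have "set (rev (sorted_list_of_set C)) = {c \<in> C. c \<le> n}" using finC by (auto simp: cols_def)
  ultimately show ?thesis unfolding xi_def using fold_xi_step_inv xi_inv_init by blast
qed

end

section \<open>Comparing alternating paths by their keys\<close>

text \<open>p lies strictly below q, or in the same row strictly to the right
  (column coordinates: smaller label = further right).\<close>
definition below_right :: "nat \<times> nat \<Rightarrow> nat \<times> nat \<Rightarrow> bool" where
  "below_right p q \<longleftrightarrow> fst q < fst p \<or> (fst p = fst q \<and> snd p < snd q)"

context perm_tab
begin

lemma path_gt_below_right: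
  "path_gt n R f a b \<longleftrightarrow> below_right (end_pos n R f a b) (end_pos n R f b a)"
  by (simp add: path_gt_def below_right_def Let_def)

lemma end_pos_unfold:
  "end_pos n R f a b =
    (let A' = take (length (path a) - common_suffix_len (path a) (path b)) (path a)
     in if A' = [] then dot_pos n R f a else dot_pos n R f (last A'))"
  by (simp add: end_pos_def Let_def)

lemma dot_pos_col: "c \<in> C \<Longrightarrow> dot_pos n R f c = (brow c, c)"
  using col_not_row by (simp add: dot_pos_def)

lemma dot_pos_rrow: "rrow y \<Longrightarrow> dot_pos n R f y = (y, wcol y)"
  using rrow_row by (simp add: dot_pos_def)

lemma dot_pos_urow: "urow y \<Longrightarrow> dot_pos n R f y = (y, 0)"
  using urow_row urow_not_rrow by (simp add: dot_pos_def)

lemma route_path: "dotted x \<Longrightarrow> route x = path x @ [last (route x)] \<and> path x \<noteq> []"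
  using path_dotted[of x] dotted_not_urow[of x] by (simp add: route_def)

lemma path_last:
  assumes d: "dotted x"
  shows "last (path x) \<in> C \<and> brow (last (path x)) = last (route x)"
proof -
  let ?c = "last (path x)" and ?r = "last (route x)"
  have lx: "label x" using d by (simp add: label_def)
  have "route x = butlast (path x) @ ?c # ?r # []"
    using route_path[OF d] by (metis append_Cons append_assoc append_butlast_last_id self_append_conv2)
  then have c: "dotted ?c" "succ ?c = ?r" using route_step[OF lx] by blast+
  have "?c \<notin> R"
  proof
    assume "?c \<in> R"
    then have "succ ?c \<in> C" using c(1) white_facts by (auto simp: succ_def dotted_def cols_def)
    then show False using c(2) route_last[OF lx] urow_row col_not_row by metis
  qed
  then show ?thesis using c by (auto simp: dotted_def succ_def restricted_row_def)
qed

lemma key_lt_of_on_path: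
  assumes j: "j \<in> C" and k: "k \<in> set (path j)" "k \<noteq> j"
  shows "key j < key k"
proof -
  have d: "dotted j" using j by (simp add: dotted_def)
  have lj: "label j" using d by (simp add: label_def)
  obtain r where r: "route j = path j @ [r]" using route_path[OF d] by blast
  obtain xs ys where "path j = xs @ k # ys" using k(1) by (meson split_list)
  then have rj: "route j = xs @ k # ys @ [r]" using r by simp
  have "hd (route j) = j" using route_Cons[OF lj] by (metis list.sel(1))
  then have "xs \<noteq> []" using rj k(2) by auto
  then obtain x0 xs' where x0: "rev xs = x0 # xs'" by (cases "rev xs") auto
  have "x0 \<in> set (route j)" using rj x0 by (metis in_set_conv_decomp list.set_intros(1) set_rev Un_iff set_append)
  then have "enc x0 < sentinel" using route_range[OF lj] enc_lt_sentinel by blast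
  moreover have "key j = map enc (rev (route k)) @ (enc x0 # map enc xs' @ [sentinel])"
    using rj route_suffix[OF lj rj] x0 by (simp add: key_def)
  ultimately show ?thesis by (simp add: key_def)
qed

text \<open>Two distinct dots with the same successor: their positions compare like
  their codes (rows with white dots in one column, or columns with black dots in
  one row).\<close>
lemma sibling_below_right:
  assumes x: "dotted x" and y: "dotted y" and same: "succ x = succ y" and "x \<noteq> y"
  shows "below_right (dot_pos n R f x) (dot_pos n R f y) \<longleftrightarrow> enc y < enc x"
proof (cases "x \<in> R")
  case True
  then have rx: "rrow x" using x by (auto simp: dotted_def cols_def)
  have "y \<in> R"
  proof (rule ccontr)
    assume "y \<notin> R"
    then have "y \<in> C" "succ y = brow y" using y by (auto simp: dotted_def succ_def restricted_row_def)
    then show False using same True rx white_facts black_lt col_not_row by (metis succ_def)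
  qed
  then have "rrow y" using y by (auto simp: dotted_def cols_def)
  then show ?thesis using rx True \<open>y \<in> R\<close> same assms(4)
    by (auto simp: dot_pos_rrow below_right_def succ_def enc_row)
next
  case False
  then have cx: "x \<in> C" using x by (auto simp: dotted_def restricted_row_def)
  have "y \<notin> R"
  proof
    assume "y \<in> R"
    then have "rrow y" using y by (auto simp: dotted_def cols_def)
    then show False using same False \<open>y \<in> R\<close> white_facts black_lt[OF cx] col_not_row by (metis succ_def)
  qed
  then have cy: "y \<in> C" using y by (auto simp: dotted_def restricted_row_def)
  have "x \<le> n" "y \<le> n" using cx cy by (auto simp: cols_def)
  then show ?thesis using cx cy False \<open>y \<notin> R\<close> same assms(4)
    by (auto simp: dot_pos_col below_right_def succ_def enc_col)
qed

lemma key_sibling: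
  assumes la: "label a" and lb: "label b"
    and ra: "route a = A @ x # u" and rb: "route b = B @ y # u" and "x \<noteq> y"
  shows "key b < key a \<longleftrightarrow> enc y < enc x"
proof -
  have "x \<in> {1..n}" "y \<in> {1..n}" using route_range[OF la] route_range[OF lb] ra rb by auto
  then have "enc x \<noteq> enc y" using enc_inj assms(5) by blast
  then show ?thesis using ra rb by (auto simp: key_def)
qed

text \<open>Comparison with the empty path of an unrestricted row k: P_j > P_k iff the
  route of j ends in a row below k.\<close>
lemma path_gt_urow:
  assumes j: "j \<in> C" and k: "urow k"
  shows "path_gt n R f j k \<longleftrightarrow> key k < key j"
proof -
  have d: "dotted j" using j by (simp add: dotted_def)
  define A r where "A = path j" and "r = last (route j)"
  define c where "c = last A"
  have rj: "route j = A @ [r]" and ne: "A \<noteq> []"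
    using route_path[OF d] by (simp_all add: A_def r_def)
  have c: "c \<in> C" "brow c = r" using path_last[OF d] by (simp_all add: A_def r_def c_def)
  have rR: "r \<in> R" using route_last[of j] d urow_row by (simp add: label_def r_def)
  have "end_pos n R f j k = (r, c)"
    using ne dot_pos_col[OF c(1)] c(2) path_urow[OF k] by (simp add: end_pos_unfold A_def c_def)
  moreover have "end_pos n R f k j = (k, 0)"
    using dot_pos_urow[OF k] path_urow[OF k] by (simp add: end_pos_unfold)
  ultimately have lhs: "path_gt n R f j k \<longleftrightarrow> k < r"
    by (auto simp: path_gt_below_right below_right_def)
  have "A = butlast A @ [c]" using ne by (simp add: c_def)
  then have "key j = r # enc c # map enc (rev (butlast A)) @ [sentinel]"
    using rj rR by (metis (no_types) key_def enc_row append_Cons append_Nil list.simps(9) map_append rev.simps rev_append rev_rev_ident)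
  moreover have "key k = [k, sentinel]"
    using urow_row[OF k] by (simp add: key_def route_urow[OF k] enc_row)
  moreover have "enc c < sentinel" using c(1) enc_lt_sentinel by (simp add: cols_def)
  ultimately show ?thesis unfolding lhs by auto
qed

text \<open>Comparison of P_j with the nonempty path of a label k > j not on it:
  strip the longest common final segment; the two remaining paths end at
  sibling dots, or (if the paths are disjoint) in columns whose black dots lie
  in the final rows of the routes.\<close>
lemma path_gt_dotted:
  assumes j: "j \<in> C" and k: "dotted k" "j < k" and nk: "k \<notin> set (path j)"
  shows "path_gt n R f j k \<longleftrightarrow> key k < key j"
proof -
  have dj: "dotted j" using j by (simp add: dotted_def)
  have lj: "label j" and lk: "label k" using dj k(1) by (simp_all add: label_def)
  define A B where "A = path j" and "B = path k"
  define rj rk where "rj = last (route j)" and "rk = last (route k)"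
  have ej: "route j = A @ [rj]" and ek: "route k = B @ [rk]"
    using route_path[OF dj] route_path[OF k(1)] by (simp_all add: A_def B_def rj_def rk_def)
  obtain A' B' s where dec: "A = A' @ s" "B = B' @ s" "length s = common_suffix_len A B"
    and diff: "A' \<noteq> [] \<and> B' \<noteq> [] \<longrightarrow> last A' \<noteq> last B'"
    using common_suffix_decomp[of A B] by blast
  have jA: "j \<in> set A" "k \<in> set B" using path_dotted[OF dj] path_dotted[OF k(1)] by (simp_all add: A_def B_def)
  have A'ne: "A' \<noteq> []"
  proof
    assume "A' = []"
    then have "j \<in> set (route k)" using dec ek jA by simp
    then show False using route_cols_ge[OF lk _ j] k(2) by auto
  qed
  have B'ne: "B' \<noteq> []"
  proof
    assume "B' = []"
    then show False using dec nk jA A_def by simp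
  qed
  define x y where "x = last A'" and "y = last B'"
  have xy: "x \<noteq> y" using diff A'ne B'ne by (simp add: x_def y_def)
  have "end_pos n R f j k = dot_pos n R f x"
    using A'ne dec by (simp add: end_pos_unfold x_def A_def B_def)
  moreover have "end_pos n R f k j = dot_pos n R f y"
    using B'ne dec common_suffix_len_sym[of B A] by (simp add: end_pos_unfold y_def A_def B_def)
  ultimately have lhs: "path_gt n R f j k \<longleftrightarrow> below_right (dot_pos n R f x) (dot_pos n R f y)"
    by (simp add: path_gt_below_right)
  have rj': "route j = butlast A' @ x # s @ [rj]" and rk': "route k = butlast B' @ y # s @ [rk]"
    using ej ek dec A'ne B'ne by (simp_all add: x_def y_def)
  show ?thesis
  proof (cases "s = [] \<and> rj \<noteq> rk")
    case True
    then have "x = last A" "y = last B" using dec by (simp_all add: x_def y_def)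
    then have "x \<in> C" "brow x = rj" "y \<in> C" "brow y = rk"
      using path_last[OF dj] path_last[OF k(1)] by (simp_all add: A_def B_def rj_def rk_def)
    moreover have "rj \<in> R" "rk \<in> R"
      using route_last[OF lj] route_last[OF lk] urow_row by (simp_all add: rj_def rk_def)
    ultimately show ?thesis
      using True rj' rk' by (auto simp: lhs dot_pos_col below_right_def key_def enc_row)
  next
    case False
    have same_end: "rj = rk"
    proof (cases "s = []")
      case False
      then have "last A = last B" using dec by simp
      then show ?thesis using path_last[OF dj] path_last[OF k(1)] by (simp add: A_def B_def rj_def rk_def)
    qed (use \<open>\<not> (s = [] \<and> rj \<noteq> rk)\<close> in simp)
    define u where "u = s @ [rj]"
    have ru: "route j = butlast A' @ x # u" "route k = butlast B' @ y # u"
      using rj' rk' same_end by (simp_all add: u_def)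
    have "u \<noteq> []" by (simp add: u_def)
    then obtain z u' where u: "u = z # u'" by (cases u) auto
    have "dotted x" "succ x = z" "dotted y" "succ y = z"
      using route_step[OF lj, of _ x z u'] route_step[OF lk, of _ y z u'] ru u by auto
    then show ?thesis
      using lhs sibling_below_right[of x y] key_sibling[OF lj lk ru xy] xy by simp
  qed
qed

lemma path_gt_iff_key:
  assumes "j \<in> C" "k \<in> {1..n}" "j < k" "k \<notin> set (path j)"
  shows "path_gt n R f j k \<longleftrightarrow> key k < key j"
  using assms path_gt_urow path_gt_dotted dotted_iff by blast

end

section \<open>Counting inversions\<close>

lemma sorted_wrt_less_nth_iff:
  fixes g :: "'a \<Rightarrow> 'b :: linorder"
  assumes "sorted_wrt (\<lambda>x y. g x < g y) w" "a < length w" "b < length w"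
  shows "a < b \<longleftrightarrow> g (w ! a) < g (w ! b)"
  using sorted_wrt_nth_less[OF assms(1)] assms(2,3)
  by (metis less_asym linorder_neqE_nat)

context perm_tab
begin

lemma xi_descent_iff:
  assumes "b < length (xi n R f)"
  shows "(Suc b < length (xi n R f) \<and> xi n R f ! Suc b < xi n R f ! b) \<longleftrightarrow> xi n R f ! b \<notin> R"
proof -
  let ?p = "xi n R f"
  have adj: "successively adj_ok ?p" and last: "?p \<noteq> [] \<longrightarrow> last ?p \<in> R"
    using xi_invariant by (auto simp: xi_inv_def)
  show ?thesis
  proof
    assume desc: "Suc b < length ?p \<and> ?p ! Suc b < ?p ! b"
    then have "adj_ok (?p ! b) (?p ! Suc b)" using successively_nth[OF adj] by blast
    then show "?p ! b \<notin> R" using desc by (auto simp: adj_ok_def)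
  next
    assume nR: "?p ! b \<notin> R"
    have "Suc b < length ?p"
    proof (rule ccontr)
      assume "\<not> Suc b < length ?p"
      then have "b = length ?p - 1" "?p \<noteq> []" using assms by auto
      then have "?p ! b = last ?p" by (simp add: last_conv_nth)
      then show False using nR last assms by auto
    qed
    then show "Suc b < length ?p \<and> ?p ! Suc b < ?p ! b"
      using successively_nth[OF adj] nR by (auto simp: adj_ok_def)
  qed
qed

lemma inversion_iff_key:
  assumes "j \<in> C" "k \<in> {1..n}" "j < k"
  shows "k \<notin> set (path j) \<and> path_gt n R f j k \<longleftrightarrow> key k < key j"
  using assms path_gt_iff_key key_lt_of_on_path less_asym by blast

text \<open>The occurrences (a, b) of 3-21 in xi(T) correspond to the inversions
  (pi_b, pi_a) of T.\<close>
lemma tab_inv_eq_f3_21: "tab_inv n R f = f3_21 (xi n R f)"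
proof -
  let ?p = "xi n R f"
  let ?L = "length ?p"
  have dist: "distinct ?p" and set_p: "set ?p = {1..n}"
    and sorted: "sorted_wrt (\<lambda>a b. key a < key b) ?p"
    using xi_invariant placed_0 by (auto simp: xi_inv_def)
  have in_range: "?p ! i \<in> {1..n}" if "i < ?L" for i using set_p that nth_mem by blast
  define X where "X = {(a, b). a < b \<and> b + 1 < ?L \<and> ?p ! a > ?p ! b \<and> ?p ! b > ?p ! (b + 1)}"
  define Y where "Y = {(j, k). j \<in> C \<and> j < k \<and> k \<le> n \<and> k \<notin> set (path j) \<and> path_gt n R f j k}"
  have Y_iff: "(j, k) \<in> Y \<longleftrightarrow> j \<in> C \<and> k \<in> {1..n} \<and> j < k \<and> key k < key j" for j k
    using inversion_iff_key[of j k] by (auto simp: Y_def cols_def)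
  have "bij_betw (\<lambda>(a, b). (?p ! b, ?p ! a)) X Y"
  proof (rule bij_betw_imageI)
    show "inj_on (\<lambda>(a, b). (?p ! b, ?p ! a)) X"
      using dist by (auto simp: inj_on_def X_def nth_eq_iff_index_eq)
    show "(\<lambda>(a, b). (?p ! b, ?p ! a)) ` X = Y"
    proof (intro set_eqI iffI)
      fix q assume "q \<in> (\<lambda>(a, b). (?p ! b, ?p ! a)) ` X"
      then obtain a b where ab: "(a, b) \<in> X" "q = (?p ! b, ?p ! a)" by auto
      then have h: "a < b" "Suc b < ?L" "?p ! a > ?p ! b" "?p ! b > ?p ! Suc b" by (auto simp: X_def)
      then have "?p ! b \<in> C" using xi_descent_iff[of b] in_range[of b] by (simp add: cols_def)
      moreover have "key (?p ! a) < key (?p ! b)"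
        using sorted_wrt_less_nth_iff[OF sorted, of a b] h by simp
      ultimately show "q \<in> Y" unfolding ab(2) Y_iff using in_range[of a] h by auto
    next
      fix q assume "q \<in> Y"
      then obtain j k where q: "q = (j, k)" and h: "j \<in> C" "k \<in> {1..n}" "j < k" "key k < key j"
        using Y_iff by (cases q) auto
      then have "j \<in> set ?p" "k \<in> set ?p" using set_p by (auto simp: cols_def)
      then obtain a b where ab: "a < ?L" "?p ! a = k" "b < ?L" "?p ! b = j" by (metis in_set_conv_nth)
      have "a < b" using sorted_wrt_less_nth_iff[OF sorted ab(1) ab(3)] h ab by simp
      moreover have "Suc b < ?L \<and> ?p ! Suc b < ?p ! b"
        using xi_descent_iff[OF ab(3)] h ab col_not_row by simp
      ultimately have "(a, b) \<in> X" using h ab by (auto simp: X_def)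
      then show "q \<in> (\<lambda>(a, b). (?p ! b, ?p ! a)) ` X" using q ab by force
    qed
  qed
  then have "card X = card Y" by (rule bij_betw_same_card)
  then show ?thesis unfolding tab_inv_def f3_21_def X_def Y_def by simp
qed

end

theorem theorem2p1:
  fixes n :: nat and R :: "nat set" and f :: "nat \<Rightarrow> nat \<Rightarrow> bool"
  assumes "perm_tableau n R f"
  shows "tab_inv n R f = f32_1 (rev_compl n (xi n R f))
         \<and> tab_inv n R f = f3_21 (xi n R f)"
proof -
  interpret perm_tab n R f using assms by unfold_locales
  have "set (xi n R f) = {1..n}" using xi_invariant placed_0 by (simp add: xi_inv_def)
  then have "f32_1 (rev_compl n (xi n R f)) = f3_21 (xi n R f)"
    by (intro f32_1_rev_compl) auto
  then show ?thesis using tab_inv_eq_f3_21 by simp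
qed

end
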